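(* There is a $\mathbb{Q}$-valued function $\eta$ on the set of isomorphism classes of finite oriented trees such that: (i) if $T$ is a tree with one vertex and no edges, then $\eta(T)=1$; (ii) if an oriented tree $T'$ (resp. $U$) is obtained from an oriented tree $T$ by reversing the orientation of an edge $e$ (resp. by contracting $e$ to a point), then $\eta(T)+\eta(T')+\eta(U)=0$; (iii) if an oriented tree $T'$ (resp. $T''$) is obtained from an oriented tree $T$ by replacing two distinct edges $ab,ac$ with common origin $a$ by $ab,bc$ (resp. by $ac,cb$), and $U$ is obtained from $T$ by identifying $b$ with $c$ and $ab$ with $ac$, then $\eta(T)=\eta(T')+\eta(T'')+\eta(U)$.
   Context: An oriented tree is a finite tree each of whose edges is given an orientation; an edge $ab$ means an edge oriented from vertex $a$ to vertex $b$. Isomorphism of oriented trees preserves edge orientations. *)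

theory Defs
  imports Complex_Main
begin

text \<open>An oriented tree on vertex set V with directed edge set E: a pair (a,b) in E is an
edge oriented from a to b. The underlying undirected graph is a finite simple tree.\<close>

type_synonym otree = "nat set \<times> (nat \<times> nat) set"

definition oriented_tree :: "otree \<Rightarrow> bool" where
  "oriented_tree T \<longleftrightarrow>
     (let V = fst T; E = snd T in
       finite V \<and> V \<noteq> {} \<and> E \<subseteq> V \<times> V \<and>
       (\<forall>x. (x, x) \<notin> E) \<and>
       (\<forall>x y. (x, y) \<in> E \<longrightarrow> (y, x) \<notin> E) \<and>
       (\<forall>x\<in>V. \<forall>y\<in>V. (x, y) \<in> (E \<union> E\<inverse>)\<^sup>*) \<and>
       card E = card V - 1)"

definition otree_iso :: "otree \<Rightarrow> otree \<Rightarrow> bool" where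
  "otree_iso T S \<longleftrightarrow>
     (\<exists>f. bij_betw f (fst T) (fst S) \<and>
          (\<forall>x\<in>fst T. \<forall>y\<in>fst T. (x, y) \<in> snd T \<longleftrightarrow> (f x, f y) \<in> snd S))"

definition reverse_edge :: "otree \<Rightarrow> nat \<Rightarrow> nat \<Rightarrow> otree" where
  "reverse_edge T a b = (fst T, (snd T - {(a, b)}) \<union> {(b, a)})"

definition merge_vertices :: "otree \<Rightarrow> nat \<Rightarrow> nat \<Rightarrow> otree" where
  "merge_vertices T b c =
     (let g = (\<lambda>x. if x = c then b else x) in
       (g ` fst T, {(g x, g y) | x y. (x, y) \<in> snd T \<and> g x \<noteq> g y}))"

definition contract_edge :: "otree \<Rightarrow> nat \<Rightarrow> nat \<Rightarrow> otree" where
  "contract_edge T a b = merge_vertices T a b"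

definition replace_edge :: "otree \<Rightarrow> nat \<times> nat \<Rightarrow> nat \<times> nat \<Rightarrow> otree" where
  "replace_edge T e e' = (fst T, (snd T - {e}) \<union> {e'})"

end

(* eta(T) is the linear coefficient of the strict order polynomial of T, the polynomial whose
   value at N is the number of labellings f of the vertices by {0, ..., N - 1} with f x < f y for
   every edge xy.  A single vertex has polynomial N, so eta = 1.  Sorting the labellings of any
   directed graph by whether f b < f c, f c < f b or f b = f c gives
     Omega(R) = Omega(R + bc) + Omega(R + cb) + Omega(R with b and c identified).
   For (iii) take R = E: a labelling increasing along ab, ac and bc is the same as one increasing
   along ab and bc, i.e. a labelling of T'.  For (ii) take R = E - {ab}: this graph is
   disconnected, so its order polynomial is a product of two polynomials without constant term,
   and its linear coefficient vanishes. *)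

theory Submission
  imports Defs "HOL-Library.FuncSet" "HOL-Computational_Algebra.Polynomial"
begin

section \<open>Trees\<close>

lemma card_le_Suc_card_edges_if_connected:
  fixes V :: "'a set" and E :: "('a \<times> 'a) set"
  assumes "finite V" and "E \<subseteq> V \<times> V" and "r \<in> V"
    and conn: "\<forall>v\<in>V. (v, r) \<in> (E \<union> E\<inverse>)\<^sup>*"
  shows "card V \<le> card E + 1"
proof -
  define S where "S = E \<union> E\<inverse>"
  define d where "d v = (LEAST n. (v, r) \<in> S ^^ n)" for v
  have d: "(v, r) \<in> S ^^ d v" if "v \<in> V" for v
  proof -
    have "(v, r) \<in> S\<^sup>*" using conn that unfolding S_def by blast
    then obtain n where "(v, r) \<in> S ^^ n" by (auto simp: rtrancl_power)
    then show ?thesis unfolding d_def by (rule LeastI)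
  qed
  \<comment> \<open>charge every vertex other than r to an edge leading closer to r\<close>
  have "\<forall>v\<in>V - {r}. \<exists>e\<in>E. \<exists>u. (e = (v, u) \<or> e = (u, v)) \<and> d u < d v"
  proof
    fix v assume v: "v \<in> V - {r}"
    have "d v \<noteq> 0" using d[of v] v by (metis DiffE insertI1 pair_in_Id_conv relpow.simps(1))
    then obtain n where n: "d v = Suc n" using not0_implies_Suc by blast
    then obtain u where vu: "(v, u) \<in> S" and ur: "(u, r) \<in> S ^^ n"
      using d[of v] v by (metis DiffD1 relpow_Suc_D2)
    have "d u \<le> n" using ur unfolding d_def by (rule Least_le)
    then have "d u < d v" using n by simp
    then show "\<exists>e\<in>E. \<exists>u. (e = (v, u) \<or> e = (u, v)) \<and> d u < d v"
      using vu unfolding S_def by blast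
  qed
  then obtain edge where edge: "\<And>v. v \<in> V - {r} \<Longrightarrow>
      edge v \<in> E \<and> (\<exists>u. (edge v = (v, u) \<or> edge v = (u, v)) \<and> d u < d v)"
    by (metis bchoice)
  have "inj_on edge (V - {r})"
  proof (rule inj_onI)
    fix v w assume v: "v \<in> V - {r}" and w: "w \<in> V - {r}" and eq: "edge v = edge w"
    obtain u u' where "edge v = (v, u) \<or> edge v = (u, v)" "d u < d v"
      and "edge w = (w, u') \<or> edge w = (u', w)" "d u' < d w"
      using edge[OF v] edge[OF w] by blast
    then show "v = w" using eq by auto
  qed
  moreover have "edge ` (V - {r}) \<subseteq> E" using edge by blast
  moreover have "finite E" using assms(1,2) finite_subset by blast
  ultimately have "card (V - {r}) \<le> card E" by (metis card_inj_on_le)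
  then show ?thesis using assms(1,3) by simp
qed

lemma oriented_treeD:
  assumes "oriented_tree (V, E)"
  shows "finite V" "V \<noteq> {}" "E \<subseteq> V \<times> V" "(x, x) \<notin> E" "(x, y) \<in> E \<Longrightarrow> (y, x) \<notin> E"
    and "\<forall>x\<in>V. \<forall>y\<in>V. (x, y) \<in> (E \<union> E\<inverse>)\<^sup>*" and "card E = card V - 1"
  using assms unfolding oriented_tree_def Let_def by auto

lemma oriented_tree_edge_is_bridge:
  assumes T: "oriented_tree (V, E)" and e: "(x, y) \<in> E"
  defines "F \<equiv> E - {(x, y)}"
  shows "(x, y) \<notin> (F \<union> F\<inverse>)\<^sup>*"
proof
  assume xy: "(x, y) \<in> (F \<union> F\<inverse>)\<^sup>*"
  have "E \<union> E\<inverse> \<subseteq> (F \<union> F\<inverse>)\<^sup>*"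
  proof -
    have "(y, x) \<in> (F \<union> F\<inverse>)\<^sup>*"
      using rtrancl_converseI[OF xy] by (simp add: converse_Un sup_commute)
    then show ?thesis using xy unfolding F_def by auto
  qed
  then have "(E \<union> E\<inverse>)\<^sup>* \<subseteq> (F \<union> F\<inverse>)\<^sup>*"
    by (metis rtrancl_subset_rtrancl rtrancl_idemp)
  then have "\<forall>v\<in>V. (v, x) \<in> (F \<union> F\<inverse>)\<^sup>*"
    using oriented_treeD(3,6)[OF T] e by blast
  then have "card V \<le> card F + 1"
    using card_le_Suc_card_edges_if_connected[of V F x] oriented_treeD(1,3)[OF T] e
    unfolding F_def by blast
  moreover have "card F + 1 = card E"
    using e oriented_treeD(1,3)[OF T] finite_subset[OF _ finite_cartesian_product]
    unfolding F_def by (metis card_Suc_Diff1 Suc_eq_plus1)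
  ultimately show False using oriented_treeD(1,2,7)[OF T] by (simp add: card_gt_0_iff)
qed

lemma oriented_tree_no_triangle:
  assumes T: "oriented_tree (V, E)" and "(a, b) \<in> E" "(a, c) \<in> E"
  shows "(b, c) \<notin> E"
proof
  assume bc: "(b, c) \<in> E"
  define F where "F = E - {(b, c)}"
  have "(b, a) \<in> F \<union> F\<inverse>" "(a, c) \<in> F \<union> F\<inverse>"
    using assms oriented_treeD(4)[OF T] unfolding F_def by auto
  then have "(b, c) \<in> (F \<union> F\<inverse>)\<^sup>*" by (meson r_into_rtrancl rtrancl_trans)
  with oriented_tree_edge_is_bridge[OF T bc] show False unfolding F_def by blast
qed

lemma oriented_tree_delete_edge_split:
  assumes T: "oriented_tree (V, E)" and ab: "(a, b) \<in> E"
  obtains A B where "V = A \<union> B" "A \<inter> B = {}" "a \<in> A" "b \<in> B"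
    and "E - {(a, b)} \<subseteq> A \<times> A \<union> B \<times> B"
proof
  define F where "F = E - {(a, b)}"
  define A where "A = {z \<in> V. (a, z) \<in> (F \<union> F\<inverse>)\<^sup>*}"
  show "V = A \<union> (V - A)" "A \<inter> (V - A) = {}" by (auto simp: A_def)
  show "a \<in> A" "b \<in> V - A"
    using oriented_tree_edge_is_bridge[OF T ab] ab oriented_treeD(3)[OF T]
    unfolding A_def F_def by auto
  have "(x, y) \<in> A \<times> A \<union> (V - A) \<times> (V - A)" if "(x, y) \<in> F" for x y
  proof -
    have "(a, x) \<in> (F \<union> F\<inverse>)\<^sup>* \<longleftrightarrow> (a, y) \<in> (F \<union> F\<inverse>)\<^sup>*"
      using that by (meson UnI1 UnI2 converseI rtrancl.rtrancl_into_rtrancl)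
    then show ?thesis
      using that oriented_treeD(3)[OF T] unfolding A_def F_def by auto
  qed
  then show "E - {(a, b)} \<subseteq> A \<times> A \<union> (V - A) \<times> (V - A)" unfolding F_def by auto
qed

section \<open>Strictly increasing labellings\<close>

definition strict_labellings :: "'a set \<Rightarrow> ('a \<times> 'a) set \<Rightarrow> 'b::linorder set \<Rightarrow> ('a \<Rightarrow> 'b) set" where
  "strict_labellings V R S = {f \<in> V \<rightarrow>\<^sub>E S. \<forall>(x, y) \<in> R. f x < f y}"

definition onto_labellings :: "'a set \<Rightarrow> ('a \<times> 'a) set \<Rightarrow> 'b::linorder set \<Rightarrow> ('a \<Rightarrow> 'b) set" where
  "onto_labellings V R S = {f \<in> strict_labellings V R S. f ` V = S}"

lemma mem_strict_labellings:
  "f \<in> strict_labellings V R S \<longleftrightarrow> f \<in> V \<rightarrow>\<^sub>E S \<and> (\<forall>x y. (x, y) \<in> R \<longrightarrow> f x < f y)"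
  unfolding strict_labellings_def by auto

lemma strict_labellings_mono: "S \<subseteq> T \<Longrightarrow> strict_labellings V R S \<subseteq> strict_labellings V R T"
  unfolding strict_labellings_def using PiE_mono[of V "\<lambda>_. S" "\<lambda>_. T"] by blast

lemma finite_strict_labellings: "finite V \<Longrightarrow> finite S \<Longrightarrow> finite (strict_labellings V R S)"
  by (rule finite_subset[of _ "V \<rightarrow>\<^sub>E S"]) (auto simp: mem_strict_labellings intro: finite_PiE)

lemma strict_labellings_insert_trans:
  assumes "(a, b) \<in> R" "(b, c) \<in> R"
  shows "strict_labellings V (insert (a, c) R) S = strict_labellings V R S"
  using assms by (auto simp: mem_strict_labellings) (metis less_trans)

lemma card_strict_labellings_trichotomy:
  assumes "finite V" "finite S"
  shows "card (strict_labellings V R S) =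
      card (strict_labellings V (insert (a, b) R) S) + card (strict_labellings V (insert (b, a) R) S)
      + card {f \<in> strict_labellings V R S. f a = f b}"
proof -
  let ?L = "strict_labellings V R S"
  have less: "strict_labellings V (insert (x, y) R) S = {f \<in> ?L. f x < f y}" for x y
    by (auto simp: mem_strict_labellings)
  have fin: "finite ?L" using assms by (rule finite_strict_labellings)
  have "card ?L = card ({f \<in> ?L. f a < f b} \<union> {f \<in> ?L. f b < f a} \<union> {f \<in> ?L. f a = f b})"
    by (rule arg_cong[where f = card]) auto
  also have "\<dots> = card ({f \<in> ?L. f a < f b} \<union> {f \<in> ?L. f b < f a}) + card {f \<in> ?L. f a = f b}"
    by (rule card_Un_disjoint) (use fin in auto)
  also have "card ({f \<in> ?L. f a < f b} \<union> {f \<in> ?L. f b < f a})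
      = card {f \<in> ?L. f a < f b} + card {f \<in> ?L. f b < f a}"
    by (rule card_Un_disjoint) (use fin in auto)
  finally show ?thesis unfolding less .
qed

lemma restrict_comp_mem_strict_labellings:
  assumes g: "g \<in> strict_labellings W Q S" and R: "R \<subseteq> V \<times> V"
    and hom: "p ` V \<subseteq> W" "map_prod p p ` R \<subseteq> Q"
  shows "restrict (g \<circ> p) V \<in> strict_labellings V R S"
  unfolding mem_strict_labellings
proof (intro conjI allI impI)
  have "g \<in> W \<rightarrow>\<^sub>E S" using g by (simp add: mem_strict_labellings)
  then show "restrict (g \<circ> p) V \<in> V \<rightarrow>\<^sub>E S"
    unfolding restrict_PiE_iff using hom(1) by (auto intro: PiE_mem)
  fix x y assume xy: "(x, y) \<in> R"
  then have "(p x, p y) \<in> Q" using hom(2) by force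
  then have "g (p x) < g (p y)" using g by (simp add: mem_strict_labellings)
  then show "restrict (g \<circ> p) V x < restrict (g \<circ> p) V y" using xy R by auto
qed

lemma restrict_mem_strict_labellings:
  "f \<in> strict_labellings V R S \<Longrightarrow> A \<subseteq> V \<Longrightarrow> restrict f A \<in> strict_labellings A (R \<inter> A \<times> A) S"
  using restrict_comp_mem_strict_labellings[of f V R S "R \<inter> A \<times> A" A id] by (auto simp: prod.map_id0)

lemma restrict_comp_inv_into_mem_strict_labellings:
  assumes f: "f \<in> strict_labellings V R S" and R: "R \<subseteq> V \<times> V"
    and fib: "\<And>x y. x \<in> V \<Longrightarrow> y \<in> V \<Longrightarrow> p x = p y \<Longrightarrow> f x = f y"
  shows "restrict (f \<circ> inv_into V p) (p ` V) \<in> strict_labellings (p ` V) (map_prod p p ` R) S"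
  unfolding mem_strict_labellings
proof (intro conjI allI impI)
  let ?q = "inv_into V p"
  have q: "?q w \<in> V" "p (?q w) = w" if "w \<in> p ` V" for w
    using that by (auto simp: inv_into_into f_inv_into_f)
  have "f \<in> V \<rightarrow>\<^sub>E S" using f by (simp add: mem_strict_labellings)
  then show "restrict (f \<circ> ?q) (p ` V) \<in> p ` V \<rightarrow>\<^sub>E S"
    unfolding restrict_PiE_iff using q(1) by (auto intro: PiE_mem)
  fix u w assume "(u, w) \<in> map_prod p p ` R"
  then obtain x y where xy: "(x, y) \<in> R" "u = p x" "w = p y" by auto
  then have "x \<in> V" "y \<in> V" using R by auto
  then have "f (?q u) = f x" "f (?q w) = f y"
    by (intro fib; use q xy(2,3) in simp)+
  moreover have "f x < f y" using f xy(1) by (simp add: mem_strict_labellings)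
  ultimately show "restrict (f \<circ> ?q) (p ` V) u < restrict (f \<circ> ?q) (p ` V) w"
    using xy \<open>x \<in> V\<close> \<open>y \<in> V\<close> by simp
qed

lemma card_strict_labellings_pullback:
  assumes R: "R \<subseteq> V \<times> V"
  shows "card (strict_labellings (p ` V) (map_prod p p ` R) S)
       = card {f \<in> strict_labellings V R S. \<forall>x\<in>V. \<forall>y\<in>V. p x = p y \<longrightarrow> f x = f y}"
    (is "card ?L = card ?M")
proof (rule bij_betw_same_card)
  let ?q = "inv_into V p"
  show "bij_betw (\<lambda>g. restrict (g \<circ> p) V) ?L ?M"
  proof (rule bij_betw_byWitness[where f' = "\<lambda>f. restrict (f \<circ> ?q) (p ` V)"])
    show "\<forall>g\<in>?L. restrict (restrict (g \<circ> p) V \<circ> ?q) (p ` V) = g"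
    proof (intro ballI ext)
      fix g w assume "g \<in> ?L"
      then have g: "g \<in> p ` V \<rightarrow>\<^sub>E S" by (simp add: mem_strict_labellings)
      show "restrict (restrict (g \<circ> p) V \<circ> ?q) (p ` V) w = g w"
        using PiE_arb[OF g] by (cases "w \<in> p ` V") (simp_all add: inv_into_into f_inv_into_f)
    qed
    show "\<forall>f\<in>?M. restrict (restrict (f \<circ> ?q) (p ` V) \<circ> p) V = f"
    proof (intro ballI ext)
      fix f x assume f: "f \<in> ?M"
      then have "f \<in> V \<rightarrow>\<^sub>E S" by (simp add: mem_strict_labellings)
      moreover have "f (?q (p x)) = f x" if "x \<in> V"
        using f that inv_into_into[of "p x" p V] f_inv_into_f[of "p x" p V] by blast
      ultimately show "restrict (restrict (f \<circ> ?q) (p ` V) \<circ> p) V x = f x"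
        using PiE_arb[of f V] by (cases "x \<in> V") simp_all
    qed
    show "(\<lambda>g. restrict (g \<circ> p) V) ` ?L \<subseteq> ?M"
      by (auto intro!: restrict_comp_mem_strict_labellings[OF _ R])
    show "(\<lambda>f. restrict (f \<circ> ?q) (p ` V)) ` ?M \<subseteq> ?L"
      using restrict_comp_inv_into_mem_strict_labellings[OF _ R] by blast
  qed
qed

lemma card_strict_labellings_iso:
  assumes p: "bij_betw p V W" and R: "R \<subseteq> V \<times> V" and Q: "Q \<subseteq> W \<times> W"
    and edges: "\<forall>x\<in>V. \<forall>y\<in>V. (x, y) \<in> R \<longleftrightarrow> (p x, p y) \<in> Q"
  shows "card (strict_labellings W Q S) = card (strict_labellings V R S)"
proof -
  have W: "W = p ` V" using p by (simp add: bij_betw_def)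
  have "Q = map_prod p p ` R"
  proof
    show "map_prod p p ` R \<subseteq> Q" using edges R by auto
    show "Q \<subseteq> map_prod p p ` R"
    proof
      fix e assume e: "e \<in> Q"
      then obtain x y where "e = (p x, p y)" "x \<in> V" "y \<in> V" using Q W by blast
      then show "e \<in> map_prod p p ` R" using edges e by force
    qed
  qed
  moreover have "inj_on p V" using p by (simp add: bij_betw_def)
  then have "{f \<in> strict_labellings V R S. \<forall>x\<in>V. \<forall>y\<in>V. p x = p y \<longrightarrow> f x = f y}
      = strict_labellings V R S"
    by (auto dest: inj_onD)
  ultimately show ?thesis using card_strict_labellings_pullback[OF R, of p S] W by simp
qed

lemma card_strict_labellings_merge:
  assumes R: "R \<subseteq> V \<times> V" and "b \<in> V" "c \<in> V"
  defines "g \<equiv> \<lambda>x. if x = c then b else x"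
  shows "card (strict_labellings (g ` V) (map_prod g g ` R) S)
       = card {f \<in> strict_labellings V R S. f b = f c}"
proof -
  have "{f \<in> strict_labellings V R S. \<forall>x\<in>V. \<forall>y\<in>V. g x = g y \<longrightarrow> f x = f y}
      = {f \<in> strict_labellings V R S. f b = f c}"
    using assms(2,3) unfolding g_def by (auto split: if_splits)
  then show ?thesis using card_strict_labellings_pullback[OF R, of g S] by simp
qed

lemma join_mem_strict_labellings:
  assumes g: "g \<in> strict_labellings A (R \<inter> A \<times> A) S" and h: "h \<in> strict_labellings B (R \<inter> B \<times> B) S"
    and AB: "A \<inter> B = {}" and R: "R \<subseteq> A \<times> A \<union> B \<times> B"
  shows "(\<lambda>x. if x \<in> A then g x else h x) \<in> strict_labellings (A \<union> B) R S"
  unfolding mem_strict_labellings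
proof (intro conjI allI impI)
  have "g \<in> A \<rightarrow>\<^sub>E S" and h': "h \<in> B \<rightarrow>\<^sub>E S" using g h by (simp_all add: mem_strict_labellings)
  then show "(\<lambda>x. if x \<in> A then g x else h x) \<in> (A \<union> B) \<rightarrow>\<^sub>E S"
    using PiE_arb[OF h'] by (auto simp: PiE_iff extensional_def)
  fix x y assume xy: "(x, y) \<in> R"
  have "g x < g y" if "(x, y) \<in> R \<inter> A \<times> A" using g that by (simp add: mem_strict_labellings)
  moreover have "h x < h y" if "(x, y) \<in> R \<inter> B \<times> B" using h that by (simp add: mem_strict_labellings)
  ultimately show "(if x \<in> A then g x else h x) < (if y \<in> A then g y else h y)"
    using xy R AB by auto
qed

lemma card_strict_labellings_Un:
  assumes AB: "A \<inter> B = {}" and R: "R \<subseteq> A \<times> A \<union> B \<times> B"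
  shows "card (strict_labellings (A \<union> B) R S)
       = card (strict_labellings A (R \<inter> A \<times> A) S) * card (strict_labellings B (R \<inter> B \<times> B) S)"
proof -
  let ?L = "strict_labellings (A \<union> B) R S"
  let ?LA = "strict_labellings A (R \<inter> A \<times> A) S" and ?LB = "strict_labellings B (R \<inter> B \<times> B) S"
  let ?join = "\<lambda>(g, h) x. if x \<in> A then g x else h x"
  have "bij_betw (\<lambda>f. (restrict f A, restrict f B)) ?L (?LA \<times> ?LB)"
  proof (rule bij_betw_byWitness[where f' = ?join])
    show "\<forall>f\<in>?L. ?join (restrict f A, restrict f B) = f"
    proof (intro ballI ext)
      fix f x assume "f \<in> ?L"
      then have "f \<in> (A \<union> B) \<rightarrow>\<^sub>E S" by (simp add: mem_strict_labellings)
      then show "?join (restrict f A, restrict f B) x = f x"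
        using PiE_arb[of f "A \<union> B" _ x] by auto
    qed
    show "\<forall>gh\<in>?LA \<times> ?LB. (restrict (?join gh) A, restrict (?join gh) B) = gh"
    proof
      fix gh assume "gh \<in> ?LA \<times> ?LB"
      then obtain g h where gh: "gh = (g, h)" and g: "g \<in> A \<rightarrow>\<^sub>E S" and h: "h \<in> B \<rightarrow>\<^sub>E S"
        by (auto simp: mem_strict_labellings)
      have "restrict (?join gh) A = g"
        using PiE_arb[OF g] unfolding gh by auto
      moreover have "restrict (?join gh) B = h"
        using PiE_arb[OF h] AB unfolding gh by (auto simp: fun_eq_iff)
      ultimately show "(restrict (?join gh) A, restrict (?join gh) B) = gh" using gh by simp
    qed
    show "(\<lambda>f. (restrict f A, restrict f B)) ` ?L \<subseteq> ?LA \<times> ?LB"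
      using restrict_mem_strict_labellings[of _ "A \<union> B" R S] by blast
    show "?join ` (?LA \<times> ?LB) \<subseteq> ?L"
      using join_mem_strict_labellings[OF _ _ AB R] by auto
  qed
  then show ?thesis by (simp add: bij_betw_same_card card_cartesian_product)
qed

lemma mem_onto_labellings:
  "f \<in> onto_labellings V R S \<longleftrightarrow>
     f \<in> V \<rightarrow>\<^sub>E S \<and> (\<forall>x y. (x, y) \<in> R \<longrightarrow> f x < f y) \<and> f ` V = S"
  unfolding onto_labellings_def by (auto simp: mem_strict_labellings)

lemma onto_labellings_eq_empty:
  assumes "finite V" "card V < card S"
  shows "onto_labellings V R S = {}"
proof -
  have "card (f ` V) \<le> card V" for f :: "'a \<Rightarrow> 'b" using assms(1) by (rule card_image_le)
  then show ?thesis using assms(2) unfolding onto_labellings_def by (metis (mono_tags, lifting) empty_Collect_eq leD)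
qed

lemma strict_mono_on_inv_into:
  fixes h :: "'a::linorder \<Rightarrow> 'b::linorder"
  assumes h: "strict_mono_on A h"
  shows "strict_mono_on (h ` A) (inv_into A h)"
proof (rule strict_mono_onI)
  fix u w assume "u \<in> h ` A" "w \<in> h ` A" "u < w"
  then obtain x y where "x \<in> A" "y \<in> A" "u = h x" "w = h y" "h x < h y" by blast
  then show "inv_into A h u < inv_into A h w"
    using strict_mono_on_less[OF h] strict_mono_on_imp_inj_on[OF h] by simp
qed

lemma restrict_comp_mem_onto_labellings:
  assumes f: "f \<in> onto_labellings V R A" and R: "R \<subseteq> V \<times> V" and h: "strict_mono_on A h"
  shows "restrict (h \<circ> f) V \<in> onto_labellings V R (h ` A)"
  unfolding mem_onto_labellings
proof (intro conjI allI impI)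
  have fA: "f \<in> V \<rightarrow>\<^sub>E A" and onto: "f ` V = A" using f by (simp_all add: mem_onto_labellings)
  show "restrict (h \<circ> f) V \<in> V \<rightarrow>\<^sub>E h ` A"
    unfolding restrict_PiE_iff using PiE_mem[OF fA] by auto
  show "restrict (h \<circ> f) V ` V = h ` A"
    using onto by (auto simp: image_image[symmetric])
  fix x y assume xy: "(x, y) \<in> R"
  then have "x \<in> V" "y \<in> V" using R by auto
  moreover have "f x < f y" using f xy by (simp add: mem_onto_labellings)
  ultimately show "restrict (h \<circ> f) V x < restrict (h \<circ> f) V y"
    using strict_mono_onD[OF h] PiE_mem[OF fA] by simp
qed

lemma card_onto_labellings_transport:
  assumes R: "R \<subseteq> V \<times> V" and h: "strict_mono_on A h"
  shows "card (onto_labellings V R A) = card (onto_labellings V R (h ` A))"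
proof (rule bij_betw_same_card)
  let ?k = "inv_into A h"
  have inj: "inj_on h A" using h by (rule strict_mono_on_imp_inj_on)
  show "bij_betw (\<lambda>f. restrict (h \<circ> f) V) (onto_labellings V R A) (onto_labellings V R (h ` A))"
  proof (rule bij_betw_byWitness[where f' = "\<lambda>g. restrict (?k \<circ> g) V"])
    show "\<forall>f\<in>onto_labellings V R A. restrict (?k \<circ> restrict (h \<circ> f) V) V = f"
    proof (intro ballI ext)
      fix f x assume "f \<in> onto_labellings V R A"
      then have f: "f \<in> V \<rightarrow>\<^sub>E A" by (simp add: mem_onto_labellings)
      show "restrict (?k \<circ> restrict (h \<circ> f) V) V x = f x"
        using PiE_arb[OF f, of x] PiE_mem[OF f, of x] inj by (cases "x \<in> V") simp_all
    qed
    show "\<forall>g\<in>onto_labellings V R (h ` A). restrict (h \<circ> restrict (?k \<circ> g) V) V = g"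
    proof (intro ballI ext)
      fix g x assume "g \<in> onto_labellings V R (h ` A)"
      then have g: "g \<in> V \<rightarrow>\<^sub>E h ` A" by (simp add: mem_onto_labellings)
      show "restrict (h \<circ> restrict (?k \<circ> g) V) V x = g x"
        using PiE_arb[OF g, of x] PiE_mem[OF g, of x] by (cases "x \<in> V") (simp_all add: f_inv_into_f)
    qed
    show "(\<lambda>f. restrict (h \<circ> f) V) ` onto_labellings V R A \<subseteq> onto_labellings V R (h ` A)"
      using restrict_comp_mem_onto_labellings[OF _ R h] by blast
    show "(\<lambda>g. restrict (?k \<circ> g) V) ` onto_labellings V R (h ` A) \<subseteq> onto_labellings V R A"
      using restrict_comp_mem_onto_labellings[OF _ R strict_mono_on_inv_into[OF h]] inj by auto
  qed
qed

lemma card_onto_labellings_finite: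
  fixes I :: "'b::linorder set"
  assumes R: "R \<subseteq> V \<times> V" and I: "finite I"
  shows "card (onto_labellings V R I) = card (onto_labellings V R {..<card I})"
proof -
  let ?xs = "sorted_list_of_set I"
  have "strict_mono_on {..<card I} ((!) ?xs)"
    by (rule strict_mono_onI) (use I sorted_wrt_nth_less[OF strict_sorted_list_of_set] in auto)
  moreover have "(!) ?xs ` {..<length ?xs} = set ?xs" by (auto simp: set_conv_nth)
  then have "(!) ?xs ` {..<card I} = I" using I by simp
  ultimately show ?thesis using card_onto_labellings_transport[OF R] by metis
qed

section \<open>The strict order polynomial\<close>

lemma sum_Pow_card:
  fixes c :: "nat \<Rightarrow> 'b::comm_semiring_1"
  assumes A: "finite A"
  shows "(\<Sum>I\<in>Pow A. c (card I)) = (\<Sum>k\<le>card A. of_nat (card A choose k) * c k)"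
proof -
  have "(\<Sum>I\<in>Pow A. c (card I)) = (\<Sum>k\<le>card A. \<Sum>I\<in>{I \<in> Pow A. card I = k}. c (card I))"
    using A by (intro sum.group[symmetric]) (auto simp: card_mono)
  also have "\<dots> = (\<Sum>k\<le>card A. of_nat (card A choose k) * c k)"
  proof (rule sum.cong)
    fix k
    have "(\<Sum>I\<in>{I \<in> Pow A. card I = k}. c (card I)) = (\<Sum>I\<in>{I. I \<subseteq> A \<and> card I = k}. c k)"
      by (rule sum.cong) auto
    then show "(\<Sum>I\<in>{I \<in> Pow A. card I = k}. c (card I)) = of_nat (card A choose k) * c k"
      using n_subsets[OF A, of k] by simp
  qed simp
  finally show ?thesis .
qed

lemma strict_labellings_eq_UN_onto_labellings:
  "strict_labellings V R {..<N} = (\<Union>I\<in>Pow {..<N}. onto_labellings V R I)"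
proof
  show "strict_labellings V R {..<N} \<subseteq> (\<Union>I\<in>Pow {..<N}. onto_labellings V R I)"
  proof
    fix f assume f: "f \<in> strict_labellings V R {..<N}"
    then have "f ` V \<in> Pow {..<N}" by (auto simp: mem_strict_labellings)
    moreover have "f \<in> onto_labellings V R (f ` V)"
      using f by (auto simp: mem_strict_labellings mem_onto_labellings)
    ultimately show "f \<in> (\<Union>I\<in>Pow {..<N}. onto_labellings V R I)" by blast
  qed
  show "(\<Union>I\<in>Pow {..<N}. onto_labellings V R I) \<subseteq> strict_labellings V R {..<N}"
    unfolding onto_labellings_def by (blast dest: strict_labellings_mono[of _ "{..<N}" V R])
qed

lemma card_strict_labellings_binomial_sum:
  assumes V: "finite V" and R: "R \<subseteq> V \<times> V"
  shows "card (strict_labellings V R {..<N})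
       = (\<Sum>k\<le>card V. card (onto_labellings V R {..<k}) * (N choose k))"
proof -
  let ?c = "\<lambda>k. card (onto_labellings V R {..<k})"
  have "finite (onto_labellings V R I)" if "I \<subseteq> {..<N}" for I
    using finite_strict_labellings[OF V finite_subset[OF that]] by (simp add: onto_labellings_def)
  then have "card (strict_labellings V R {..<N}) = (\<Sum>I\<in>Pow {..<N}. card (onto_labellings V R I))"
    unfolding strict_labellings_eq_UN_onto_labellings
    by (intro card_UN_disjoint) (auto simp: onto_labellings_def)
  also have "\<dots> = (\<Sum>I\<in>Pow {..<N}. ?c (card I))"
    by (intro sum.cong refl card_onto_labellings_finite[OF R]) (auto intro: finite_subset)
  also have "\<dots> = (\<Sum>k\<le>N. ?c k * (N choose k))"
    by (subst sum_Pow_card) (simp_all add: mult.commute)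
  also have "\<dots> = (\<Sum>k\<le>max N (card V). ?c k * (N choose k))"
    by (rule sum.mono_neutral_left) auto
  also have "\<dots> = (\<Sum>k\<le>card V. ?c k * (N choose k))"
    by (rule sum.mono_neutral_right) (auto simp: onto_labellings_eq_empty[OF V])
  finally show ?thesis .
qed

definition binomial_poly :: "nat \<Rightarrow> 'a::field_char_0 poly" where
  "binomial_poly k = smult (1 / fact k) (\<Prod>i<k. [:- of_nat i, 1:])"

lemma poly_binomial_poly: "poly (binomial_poly k) (of_nat n) = of_nat (n choose k)"
  by (simp add: binomial_poly_def poly_prod binomial_gbinomial gbinomial_prod_rev
      atLeast0LessThan)

definition strict_order_poly :: "'a set \<Rightarrow> ('a \<times> 'a) set \<Rightarrow> 'b::field_char_0 poly" where
  "strict_order_poly V R =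
     (\<Sum>k\<le>card V. smult (of_nat (card (onto_labellings V R {..<k}))) (binomial_poly k))"

lemma poly_strict_order_poly:
  assumes "finite V" "R \<subseteq> V \<times> V"
  shows "poly (strict_order_poly V R) (of_nat N) = of_nat (card (strict_labellings V R {..<N}))"
  by (simp add: strict_order_poly_def poly_sum poly_binomial_poly
      card_strict_labellings_binomial_sum[OF assms])

lemma poly_eqI_of_nat:
  fixes p q :: "'a::{idom, ring_char_0} poly"
  assumes "\<And>n. poly p (of_nat n) = poly q (of_nat n)"
  shows "p = q"
proof (rule ccontr)
  assume "p \<noteq> q"
  then have "finite {x. poly (p - q) x = 0}" by (intro poly_roots_finite) simp
  moreover have "\<nat> \<subseteq> {x. poly (p - q) x = 0}" using assms by (auto elim: Nats_cases)
  ultimately show False using Nats_infinite finite_subset by blast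
qed

lemma strict_order_poly_singleton: "strict_order_poly {v} {} = [:0, 1:]"
proof (rule poly_eqI_of_nat)
  fix n :: nat
  have "strict_labellings {v} {} {..<n} = {v} \<rightarrow>\<^sub>E {..<n}"
    by (simp add: strict_labellings_def)
  then show "poly (strict_order_poly {v} {}) (of_nat n) = poly [:0, 1:] (of_nat n)"
    by (simp add: poly_strict_order_poly card_funcsetE)
qed

lemma coeff_0_strict_order_poly:
  assumes "finite V" "R \<subseteq> V \<times> V" "V \<noteq> {}"
  shows "coeff (strict_order_poly V R) 0 = 0"
proof -
  have "V \<rightarrow>\<^sub>E {..<0::nat} = {}" using assms(3) by (auto simp: PiE_eq_empty_iff)
  then have "strict_labellings V R {..<0::nat} = {}" by (simp add: strict_labellings_def)
  then show ?thesis using poly_strict_order_poly[OF assms(1,2), of 0] by (simp add: poly_0_coeff_0)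
qed

lemma strict_order_poly_Un:
  assumes "finite A" "finite B" "A \<inter> B = {}" "R \<subseteq> A \<times> A \<union> B \<times> B"
  shows "strict_order_poly (A \<union> B) R = strict_order_poly A (R \<inter> A \<times> A) * strict_order_poly B (R \<inter> B \<times> B)"
proof (rule poly_eqI_of_nat)
  fix n :: nat
  have "R \<subseteq> (A \<union> B) \<times> (A \<union> B)" using assms(4) by blast
  then show "poly (strict_order_poly (A \<union> B) R) (of_nat n)
      = poly (strict_order_poly A (R \<inter> A \<times> A) * strict_order_poly B (R \<inter> B \<times> B)) (of_nat n)"
    using assms by (simp add: poly_strict_order_poly card_strict_labellings_Un)
qed

lemma coeff_1_strict_order_poly_disconnected:
  assumes "finite A" "finite B" "A \<noteq> {}" "B \<noteq> {}" "A \<inter> B = {}" "R \<subseteq> A \<times> A \<union> B \<times> B"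
  shows "coeff (strict_order_poly (A \<union> B) R :: 'b::field_char_0 poly) 1 = 0"
proof -
  have "coeff (strict_order_poly A (R \<inter> A \<times> A) :: 'b poly) 0 = 0"
    and "coeff (strict_order_poly B (R \<inter> B \<times> B) :: 'b poly) 0 = 0"
    using assms by (auto intro!: coeff_0_strict_order_poly)
  then show ?thesis
    using assms by (simp add: strict_order_poly_Un coeff_mult atMost_Suc)
qed

lemma strict_order_poly_iso:
  assumes p: "bij_betw p V W" and "finite V" "R \<subseteq> V \<times> V" "Q \<subseteq> W \<times> W"
    and "\<forall>x\<in>V. \<forall>y\<in>V. (x, y) \<in> R \<longleftrightarrow> (p x, p y) \<in> Q"
  shows "strict_order_poly W Q = strict_order_poly V R"
proof (rule poly_eqI_of_nat)
  fix n :: nat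
  have "finite W" using p \<open>finite V\<close> bij_betw_finite by blast
  then show "poly (strict_order_poly W Q) (of_nat n) = poly (strict_order_poly V R) (of_nat n)"
    using assms by (simp add: poly_strict_order_poly card_strict_labellings_iso)
qed

lemma strict_order_poly_trichotomy:
  assumes V: "finite V" and R: "R \<subseteq> V \<times> V" and "b \<in> V" "c \<in> V"
  defines "g \<equiv> \<lambda>x. if x = c then b else x"
  shows "strict_order_poly V R = strict_order_poly V (insert (b, c) R)
      + strict_order_poly V (insert (c, b) R) + strict_order_poly (g ` V) (map_prod g g ` R)"
proof (rule poly_eqI_of_nat)
  fix n :: nat
  have "card (strict_labellings V R {..<n}) = card (strict_labellings V (insert (b, c) R) {..<n})
      + card (strict_labellings V (insert (c, b) R) {..<n})
      + card (strict_labellings (g ` V) (map_prod g g ` R) {..<n})"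
    unfolding g_def card_strict_labellings_merge[OF R \<open>b \<in> V\<close> \<open>c \<in> V\<close>]
    by (rule card_strict_labellings_trichotomy[OF V]) simp
  moreover have "insert (b, c) R \<subseteq> V \<times> V" "insert (c, b) R \<subseteq> V \<times> V"
    and "map_prod g g ` R \<subseteq> g ` V \<times> g ` V"
    using R \<open>b \<in> V\<close> \<open>c \<in> V\<close> by auto
  ultimately show "poly (strict_order_poly V R) (of_nat n) = poly (strict_order_poly V (insert (b, c) R)
      + strict_order_poly V (insert (c, b) R) + strict_order_poly (g ` V) (map_prod g g ` R)) (of_nat n)"
    using V R by (simp add: poly_strict_order_poly)
qed

lemma strict_order_poly_insert_trans:
  "(a, b) \<in> R \<Longrightarrow> (b, c) \<in> R \<Longrightarrow> strict_order_poly V (insert (a, c) R) = strict_order_poly V R"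
  by (simp add: strict_order_poly_def onto_labellings_def strict_labellings_insert_trans)

section \<open>The invariant\<close>

lemma merge_vertices_eq_image:
  assumes "(b, c) \<notin> E" "(c, b) \<notin> E" "\<forall>x. (x, x) \<notin> E"
  defines "g \<equiv> \<lambda>x. if x = c then b else x"
  shows "merge_vertices (V, E) b c = (g ` V, map_prod g g ` E)"
proof -
  have "g x \<noteq> g y" if "(x, y) \<in> E" for x y
    using that assms unfolding g_def by (auto split: if_splits)
  then have "{(g x, g y) | x y. (x, y) \<in> E \<and> g x \<noteq> g y} = map_prod g g ` E" by fastforce
  moreover have "merge_vertices (V, E) b c = (g ` V, {(g x, g y) | x y. (x, y) \<in> E \<and> g x \<noteq> g y})"
    unfolding merge_vertices_def g_def Let_def by simp
  ultimately show ?thesis by simp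
qed

lemma merge_vertices_Diff_edge: "merge_vertices (V, E - {(b, c)}) b c = merge_vertices (V, E) b c"
  unfolding merge_vertices_def Let_def by auto

definition eta :: "otree \<Rightarrow> rat" where
  "eta T = coeff (strict_order_poly (fst T) (snd T)) 1"

lemma eta_iso:
  assumes "oriented_tree T" "oriented_tree S" "otree_iso T S"
  shows "eta T = eta S"
proof -
  obtain VT ET VS ES where TS: "T = (VT, ET)" "S = (VS, ES)" by fastforce
  from assms(3) obtain p where "bij_betw p VT VS"
    and "\<forall>x\<in>VT. \<forall>y\<in>VT. (x, y) \<in> ET \<longleftrightarrow> (p x, p y) \<in> ES"
    unfolding otree_iso_def TS by auto
  then have "strict_order_poly VS ES = (strict_order_poly VT ET :: rat poly)"
    using oriented_treeD(1,3) assms(1,2) unfolding TS by (intro strict_order_poly_iso) auto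
  then show ?thesis unfolding eta_def TS by simp
qed

lemma eta_singleton: "eta ({v}, {}) = 1"
  by (simp add: eta_def strict_order_poly_singleton)

lemma eta_reverse_contract:
  assumes T: "oriented_tree T" and ab: "(a, b) \<in> snd T"
  shows "eta T + eta (reverse_edge T a b) + eta (contract_edge T a b) = 0"
proof -
  obtain V E where T_eq: "T = (V, E)" by fastforce
  note tree = oriented_treeD[OF T[unfolded T_eq]]
  have ab: "(a, b) \<in> E" using ab T_eq by simp
  define F where "F = E - {(a, b)}"
  define g where "g = (\<lambda>x. if x = b then a else x)"
  obtain A B where AB: "V = A \<union> B" "A \<inter> B = {}" "a \<in> A" "b \<in> B" "F \<subseteq> A \<times> A \<union> B \<times> B"
    using oriented_tree_delete_edge_split[OF T[unfolded T_eq] ab] unfolding F_def by blast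
  moreover have "finite A" "finite B" using tree(1) AB(1) by simp_all
  ultimately have F_disconnected: "coeff (strict_order_poly V F :: rat poly) 1 = 0"
    by (simp only: AB(1)) (intro coeff_1_strict_order_poly_disconnected; blast)
  have "reverse_edge (V, E) a b = (V, insert (b, a) F)"
    unfolding reverse_edge_def F_def by auto
  moreover have "contract_edge (V, E) a b = merge_vertices (V, F) a b"
    unfolding contract_edge_def F_def by (simp only: merge_vertices_Diff_edge)
  moreover have "\<dots> = (g ` V, map_prod g g ` F)"
    unfolding g_def F_def using tree(4) tree(5)[OF ab] by (intro merge_vertices_eq_image) auto
  moreover have "strict_order_poly V F = strict_order_poly V E + strict_order_poly V (insert (b, a) F)
      + (strict_order_poly (g ` V) (map_prod g g ` F) :: rat poly)"
  proof -
    have "E = insert (a, b) F" using ab unfolding F_def by auto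
    moreover have "F \<subseteq> V \<times> V" "a \<in> V" "b \<in> V" using tree(3) ab unfolding F_def by auto
    ultimately show ?thesis unfolding g_def using strict_order_poly_trichotomy[OF tree(1)] by simp
  qed
  ultimately show ?thesis using F_disconnected unfolding eta_def T_eq by (simp add: coeff_add)
qed

lemma eta_replace_merge:
  assumes T: "oriented_tree T" and ab: "(a, b) \<in> snd T" and ac: "(a, c) \<in> snd T" and "b \<noteq> c"
  shows "eta T = eta (replace_edge T (a, c) (b, c)) + eta (replace_edge T (a, b) (c, b))
      + eta (merge_vertices T b c)"
proof -
  obtain V E where T_eq: "T = (V, E)" by fastforce
  note tree = oriented_treeD[OF T[unfolded T_eq]]
  have ab: "(a, b) \<in> E" and ac: "(a, c) \<in> E" using ab ac T_eq by simp_all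
  define g where "g = (\<lambda>x. if x = c then b else x)"
  define E1 where "E1 = insert (b, c) (E - {(a, c)})"
  define E2 where "E2 = insert (c, b) (E - {(a, b)})"
  have "replace_edge (V, E) (a, c) (b, c) = (V, E1)" "replace_edge (V, E) (a, b) (c, b) = (V, E2)"
    unfolding replace_edge_def E1_def E2_def by auto
  moreover have "(b, c) \<notin> E" "(c, b) \<notin> E"
    using oriented_tree_no_triangle[OF T[unfolded T_eq]] ab ac by blast+
  then have "merge_vertices (V, E) b c = (g ` V, map_prod g g ` E)"
    unfolding g_def using tree(4) by (intro merge_vertices_eq_image) auto
  moreover have "strict_order_poly V E = strict_order_poly V E1 + strict_order_poly V E2
      + (strict_order_poly (g ` V) (map_prod g g ` E) :: rat poly)"
  proof -
    have "b \<in> V" "c \<in> V" using tree(3) ab ac by auto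
    then have "strict_order_poly V E = strict_order_poly V (insert (b, c) E)
        + strict_order_poly V (insert (c, b) E) + (strict_order_poly (g ` V) (map_prod g g ` E) :: rat poly)"
      unfolding g_def by (rule strict_order_poly_trichotomy[OF tree(1,3)])
    moreover have "strict_order_poly V (insert (a, c) E1) = (strict_order_poly V E1 :: rat poly)"
      by (rule strict_order_poly_insert_trans[of a b]) (use ab \<open>b \<noteq> c\<close> in \<open>auto simp: E1_def\<close>)
    moreover have "strict_order_poly V (insert (a, b) E2) = (strict_order_poly V E2 :: rat poly)"
      by (rule strict_order_poly_insert_trans[of a c]) (use ac \<open>b \<noteq> c\<close> in \<open>auto simp: E2_def\<close>)
    moreover have "insert (a, c) E1 = insert (b, c) E" "insert (a, b) E2 = insert (c, b) E"
      using ab ac unfolding E1_def E2_def by auto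
    ultimately show ?thesis by simp
  qed
  ultimately show ?thesis unfolding eta_def T_eq by (simp add: coeff_add)
qed

theorem lemma11p1:
  shows "\<exists>\<eta> :: otree \<Rightarrow> rat.
    (\<forall>T S. oriented_tree T \<and> oriented_tree S \<and> otree_iso T S \<longrightarrow> \<eta> T = \<eta> S) \<and>
    (\<forall>v. \<eta> ({v}, {}) = 1) \<and>
    (\<forall>T a b. oriented_tree T \<and> (a, b) \<in> snd T \<longrightarrow>
        \<eta> T + \<eta> (reverse_edge T a b) + \<eta> (contract_edge T a b) = 0) \<and>
    (\<forall>T a b c. oriented_tree T \<and> (a, b) \<in> snd T \<and> (a, c) \<in> snd T \<and> b \<noteq> c \<longrightarrow>
        \<eta> T = \<eta> (replace_edge T (a, c) (b, c)) + \<eta> (replace_edge T (a, b) (c, b))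
               + \<eta> (merge_vertices T b c))"
  using eta_iso eta_singleton eta_reverse_contract eta_replace_merge by blast

end
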